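(* Let $n\ge0$ and $f:[-1,1]\to\mathbb R$. Let $\boldsymbol\gamma:\mathbb Z\to\mathbb R$ be a real sequence supported in $\{0,1,\dots,n\}$, and write its NLFT as $\overbrace{\boldsymbol\gamma}(z)=\begin{pmatrix}a(z)&b(z)\\-b^*(z)&a^*(z)\end{pmatrix}$. Suppose $\operatorname{Re}\big[b(e^{2i\theta})e^{-in\theta}\big]=f(\cos\theta)$ for all $\theta\in[0,\pi]$. Let $\psi_k:=\arctan\gamma_k\in(-\frac\pi2,\frac\pi2)$ for $k=0,\dots,n$ and $\Psi=(\psi_0,\dots,\psi_n)$. Then $\operatorname{Im}\big(u_n(\Psi,x)\big)=f(x)$ for all $x\in[-1,1]$, where $u_n(\Psi,x)$ denotes the $(1,1)$ entry of $U_n(\Psi,x)$.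
   Context: $Z=\begin{pmatrix}1&0\\0&-1\end{pmatrix}$. For $x\in[-1,1]$, $W(x):=\begin{pmatrix}x& i\sqrt{1-x^2}\\ i\sqrt{1-x^2}&x\end{pmatrix}$ and $U_n(\Psi,x):=e^{i\psi_0 Z}\prod_{k=1}^n\big(W(x)e^{i\psi_k Z}\big)$ (factors ordered with increasing $k$ left to right). For a Laurent polynomial $a$, $a^*(z):=\overline{a(1/\overline z)}$. For a compactly supported $\boldsymbol\gamma:\mathbb Z\to\mathbb C$ supported in $[m,n']$, its NLFT is $\overbrace{\boldsymbol\gamma}(z):=\prod_{k=m}^{n'}\frac{1}{\sqrt{1+|\gamma_k|^2}}\begin{pmatrix}1&\gamma_k z^k\\-\overline{\gamma_k}z^{-k}&1\end{pmatrix}$ (ordered by increasing $k$ left to right); it always has the form $\begin{pmatrix}a&b\\-b^*&a^*\end{pmatrix}$ with $a,b$ Laurent polynomials. *)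

theory Defs
  imports "HOL-Analysis.Analysis"
begin

text \<open>2x2 complex matrices are rendered as complex^2^2 (rows/columns indexed by 1, 2).\<close>

definition mat2 :: "complex \<Rightarrow> complex \<Rightarrow> complex \<Rightarrow> complex \<Rightarrow> complex^2^2" where
  "mat2 a b c d = vector [vector [a, b], vector [c, d]]"

definition Zmat :: "complex^2^2" where
  "Zmat = mat2 1 0 0 (-1)"

definition expiZ :: "real \<Rightarrow> complex^2^2" where
  "expiZ psi = mat2 (exp (\<i> * of_real psi)) 0 0 (exp (- \<i> * of_real psi))"

definition Wmat :: "real \<Rightarrow> complex^2^2" where
  "Wmat x = mat2 (of_real x) (\<i> * of_real (sqrt (1 - x\<^sup>2)))
                 (\<i> * of_real (sqrt (1 - x\<^sup>2))) (of_real x)"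

fun Umat :: "nat \<Rightarrow> (nat \<Rightarrow> real) \<Rightarrow> real \<Rightarrow> complex^2^2" where
  "Umat 0 Psi x = expiZ (Psi 0)"
| "Umat (Suc n) Psi x = Umat n Psi x ** (Wmat x ** expiZ (Psi (Suc n)))"

definition nlft_factor :: "complex \<Rightarrow> int \<Rightarrow> complex \<Rightarrow> complex^2^2" where
  "nlft_factor g k z =
     (let s = complex_of_real (sqrt (1 + (cmod g)\<^sup>2)) in
      mat2 (1 / s) (g * z powi k / s) (- cnj g * z powi (- k) / s) (1 / s))"

definition nlft :: "(int \<Rightarrow> complex) \<Rightarrow> int \<Rightarrow> int \<Rightarrow> complex \<Rightarrow> complex^2^2" where
  "nlft gamma m m' z = foldl (**) (mat 1) (map (\<lambda>k. nlft_factor (gamma k) k z) [m..m'])"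

definition nlft_b :: "(int \<Rightarrow> complex) \<Rightarrow> int \<Rightarrow> int \<Rightarrow> complex \<Rightarrow> complex" where
  "nlft_b gamma m m' z = nlft gamma m m' z $ 1 $ 2"

end

theory Submission
  imports Defs
begin

text \<open>Conjugation by the constant matrix \<open>C = cayley\<close> turns \<open>e^(i\<psi>Z)\<close> into the real
  rotation \<open>R \<psi>\<close> and \<open>W(cos \<theta>)\<close> into the phase \<open>D w = diag(w, 1/w)\<close>, \<open>w = e^(i\<theta>)\<close>:
  \<open>C W(cos \<theta>) e^(i\<psi>Z) = D w R \<psi> C\<close>. A real NLFT coefficient \<open>\<gamma>_k\<close> at \<open>z = w^2\<close> gives
  \<open>F_k D(w^k) = D(w^k) R(arctan \<gamma>_k)\<close>, so the phases can be pushed through the product and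
  \<open>C U_n C^(-1) = NLFT(w^2) D(w^n)\<close>. For \<open>Q = [[a, b], [-b*, a*]]\<close> the \<open>(1,1)\<close> entry of
  \<open>C^(-1) Q C\<close> has imaginary part \<open>Re b\<close>; for \<open>Q = NLFT(w^2) D(w^n)\<close> this is
  \<open>Re (b(w^2) w^(-n))\<close>.\<close>

lemma mat2_nth [simp]:
  "mat2 a b c d $ 1 $ 1 = a" "mat2 a b c d $ 1 $ 2 = b"
  "mat2 a b c d $ 2 $ 1 = c" "mat2 a b c d $ 2 $ 2 = d"
  by (simp_all add: mat2_def)

lemma mat2_eta: "M = mat2 (M$1$1) (M$1$2) (M$2$1) (M$2$2)"
  unfolding vec_eq_iff forall_2 by simp

lemma mat2_eq_iff: "mat2 a b c d = mat2 e f g h \<longleftrightarrow> a = e \<and> b = f \<and> c = g \<and> d = h"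
  unfolding vec_eq_iff forall_2 by simp

lemma mat2_mult:
  "mat2 a b c d ** mat2 e f g h = mat2 (a*e + b*g) (a*f + b*h) (c*e + d*g) (c*f + d*h)"
  unfolding vec_eq_iff forall_2 by (simp add: matrix_matrix_mult_def sum_2)

lemma mat_1_eq_mat2: "(mat 1 :: complex^2^2) = mat2 1 0 0 1"
  unfolding vec_eq_iff forall_2 by (simp add: mat_def)

definition rot :: "real \<Rightarrow> complex^2^2" where
  "rot p = mat2 (cos p) (sin p) (- sin p) (cos p)"

definition cayley :: "complex^2^2" where
  "cayley = mat2 1 1 \<i> (- \<i>)"

definition cayley_inv :: "complex^2^2" where
  "cayley_inv = mat2 (1/2) (- \<i>/2) (1/2) (\<i>/2)"

definition phase_diag :: "complex \<Rightarrow> complex^2^2" where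
  "phase_diag w = mat2 w 0 0 (inverse w)"

definition su2_form :: "complex^2^2 \<Rightarrow> bool" where
  "su2_form M \<longleftrightarrow> M$2$1 = - cnj (M$1$2) \<and> M$2$2 = cnj (M$1$1)"

lemma su2_form_mult: "su2_form M \<Longrightarrow> su2_form N \<Longrightarrow> su2_form (M ** N)"
  by (subst (asm) (1 2) mat2_eta, subst mat2_eta[of M], subst mat2_eta[of N])
    (auto simp: su2_form_def mat2_mult)

lemma su2_form_mat_1: "su2_form (mat 1)"
  by (simp add: su2_form_def mat_1_eq_mat2)

lemma su2_form_foldl_mult:
  "su2_form M \<Longrightarrow> \<forall>N\<in>set Ns. su2_form N \<Longrightarrow> su2_form (foldl (**) M Ns)"
  by (induction Ns arbitrary: M) (simp_all add: su2_form_mult)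

lemma su2_form_nlft_factor:
  assumes "cnj z = inverse z"
  shows "su2_form (nlft_factor g k z)"
proof -
  have "cnj (z powi k) = z powi (- k)"
    using assms by (simp add: power_int_minus power_int_inverse)
  then show ?thesis
    by (simp add: su2_form_def nlft_factor_def Let_def)
qed

lemma su2_form_nlft:
  assumes "cnj z = inverse z"
  shows "su2_form (nlft gamma m m' z)"
  unfolding nlft_def
  by (rule su2_form_foldl_mult) (auto simp: su2_form_mat_1 su2_form_nlft_factor[OF assms])

lemma su2_form_phase_diag: "cnj w = inverse w \<Longrightarrow> su2_form (phase_diag w)"
  by (simp add: su2_form_def phase_diag_def)

lemma phase_diag_mult: "phase_diag (u * v) = phase_diag u ** phase_diag v"
  by (simp add: phase_diag_def mat2_mult mult.commute)

lemma phase_diag_1: "phase_diag 1 = mat 1"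
  by (simp add: phase_diag_def mat_1_eq_mat2)

lemma mult_phase_diag_12: "((P :: complex^2^2) ** phase_diag v) $ 1 $ 2 = P $ 1 $ 2 * inverse v"
  by (subst mat2_eta[of P]) (simp add: phase_diag_def mat2_mult)

lemma expiZ_eq_cayley_conj_rot: "expiZ p = cayley_inv ** rot p ** cayley"
  unfolding expiZ_def cayley_inv_def rot_def cayley_def mat2_mult mat2_eq_iff
  by (simp add: complex_eq_iff Re_exp Im_exp field_simps)

lemma cayley_Wmat_expiZ:
  assumes "0 \<le> t" "t \<le> pi"
  shows "cayley ** (Wmat (cos t) ** expiZ p) = phase_diag (exp (\<i> * t)) ** rot p ** cayley"
proof -
  have "sqrt (1 - (cos t)\<^sup>2) = sin t"
    using assms by (simp add: sin_squared_eq[symmetric] sin_ge_zero)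
  moreover have "inverse (exp (\<i> * t)) = exp (- (\<i> * t))"
    by (simp add: exp_minus)
  ultimately show ?thesis
    unfolding expiZ_def Wmat_def phase_diag_def rot_def cayley_def mat2_mult mat2_eq_iff
    by (simp add: complex_eq_iff Re_exp Im_exp algebra_simps)
qed

lemma nlft_factor_mult_phase_diag:
  assumes "w \<noteq> 0"
  shows "nlft_factor (complex_of_real g) (int k) (w\<^sup>2) ** phase_diag (w ^ k)
       = phase_diag (w ^ k) ** rot (arctan g)"
proof -
  have "(w\<^sup>2) powi (int k) = w ^ k * w ^ k"
    by (simp add: power_int_of_nat power_mult_distrib[symmetric] power2_eq_square)
  moreover have "(w\<^sup>2) powi (- int k) = inverse (w ^ k * w ^ k)"
    by (simp add: power_int_minus power_int_of_nat power_mult_distrib[symmetric] power2_eq_square)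
  moreover have "sqrt (1 + g\<^sup>2) > 0"
    by (simp add: add_pos_nonneg)
  ultimately show ?thesis
    unfolding nlft_factor_def Let_def phase_diag_def rot_def mat2_mult mat2_eq_iff
    using assms by (simp add: cos_arctan sin_arctan field_simps)
qed

lemma nlft_upto_succ:
  assumes "m \<le> m' + 1"
  shows "nlft gamma m (m' + 1) z = nlft gamma m m' z ** nlft_factor (gamma (m' + 1)) (m' + 1) z"
proof -
  have "[m..m' + 1] = [m..m'] @ [m' + 1]"
    using assms upto_rec2[of m "m' + 1"] by simp
  then show ?thesis
    unfolding nlft_def by simp
qed

lemma nlft_singleton: "nlft gamma m m z = nlft_factor (gamma m) m z"
  by (simp add: nlft_def)

lemma Umat_eq_cayley_conj_nlft:
  fixes gamma :: "int \<Rightarrow> real"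
  assumes "0 \<le> t" "t \<le> pi" and w: "w = exp (\<i> * t)"
  shows "Umat n (\<lambda>k. arctan (gamma (int k))) (cos t)
       = cayley_inv ** (nlft (\<lambda>k. complex_of_real (gamma k)) 0 (int n) (w\<^sup>2) ** phase_diag (w ^ n))
           ** cayley"
proof -
  let ?G = "\<lambda>k. complex_of_real (gamma k)"
  have w0: "w \<noteq> 0"
    using w by simp
  show ?thesis
  proof (induction n)
    case 0
    have "nlft ?G 0 0 (w\<^sup>2) = rot (arctan (gamma 0))"
      using nlft_factor_mult_phase_diag[OF w0, of "gamma 0" 0] by (simp add: nlft_singleton phase_diag_1)
    then show ?case
      by (simp add: phase_diag_1 expiZ_eq_cayley_conj_rot)
  next
    case (Suc n)
    let ?P = "nlft ?G 0 (int n) (w\<^sup>2)"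
    let ?R = "rot (arctan (gamma (int (Suc n))))"
    have "Umat (Suc n) (\<lambda>k. arctan (gamma (int k))) (cos t)
        = cayley_inv ** (?P ** phase_diag (w ^ n))
            ** (cayley ** (Wmat (cos t) ** expiZ (arctan (gamma (int (Suc n))))))"
      using Suc.IH by (simp add: matrix_mul_assoc)
    also have "\<dots> = cayley_inv ** (?P ** (phase_diag (w ^ Suc n) ** ?R)) ** cayley"
      using cayley_Wmat_expiZ[OF assms(1,2), folded w]
        phase_diag_mult[of "w ^ n" w, folded power_Suc2]
      by (simp add: matrix_mul_assoc)
    also have "\<dots> = cayley_inv ** (?P ** (nlft_factor (?G (int (Suc n))) (int (Suc n)) (w\<^sup>2)
                      ** phase_diag (w ^ Suc n))) ** cayley"
      by (subst nlft_factor_mult_phase_diag[OF w0]) (rule refl)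
    also have "\<dots> = cayley_inv ** (nlft ?G 0 (int (Suc n)) (w\<^sup>2) ** phase_diag (w ^ Suc n)) ** cayley"
      using nlft_upto_succ[of 0 "int n" ?G] by (simp add: matrix_mul_assoc add.commute)
    finally show ?case .
  qed
qed

lemma Im_cayley_conj_11:
  assumes "su2_form Q"
  shows "Im ((cayley_inv ** Q ** cayley) $ 1 $ 1) = Re (Q $ 1 $ 2)"
  using assms by (subst mat2_eta[of Q]) (auto simp: su2_form_def cayley_inv_def cayley_def mat2_mult)

theorem theorem3p2:
  fixes n :: nat and f :: "real \<Rightarrow> real" and gamma :: "int \<Rightarrow> real"
  assumes supp: "\<forall>k. gamma k \<noteq> 0 \<longrightarrow> 0 \<le> k \<and> k \<le> int n"
    and hb: "\<forall>\<theta>\<in>{0..pi}.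
      Re (nlft_b (\<lambda>k. complex_of_real (gamma k)) 0 (int n) (exp (2 * \<i> * of_real \<theta>))
          * exp (- \<i> * of_nat n * of_real \<theta>)) = f (cos \<theta>)"
  shows "\<forall>x\<in>{-1..1}. Im (Umat n (\<lambda>k. arctan (gamma (int k))) x $ 1 $ 1) = f x"
proof
  fix x :: real
  assume "x \<in> {-1..1}"
  then obtain t where t: "0 \<le> t" "t \<le> pi" and x: "x = cos t"
    by (metis arccos_lbound arccos_ubound atLeastAtMost_iff cos_arccos)
  define w where "w = exp (\<i> * t)"
  have unit: "cnj w = inverse w"
    by (simp add: w_def exp_cnj exp_minus)
  have w_sq: "exp (2 * \<i> * t) = w\<^sup>2"
    by (simp add: w_def power2_eq_square exp_add[symmetric] mult.assoc)
  have w_pow: "exp (- \<i> * of_nat n * t) = inverse (w ^ n)"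
    by (simp add: w_def exp_minus[symmetric] exp_of_nat_mult[symmetric] mult_ac)
  let ?P = "nlft (\<lambda>k. complex_of_real (gamma k)) 0 (int n) (w\<^sup>2)"
  have "Im (Umat n (\<lambda>k. arctan (gamma (int k))) x $ 1 $ 1) = Re ((?P ** phase_diag (w ^ n)) $ 1 $ 2)"
    unfolding x Umat_eq_cayley_conj_nlft[OF t w_def]
    by (intro Im_cayley_conj_11 su2_form_mult su2_form_nlft su2_form_phase_diag)
      (simp_all add: unit flip: power_inverse)
  also have "\<dots> = Re (nlft_b (\<lambda>k. complex_of_real (gamma k)) 0 (int n) (exp (2 * \<i> * t))
                       * exp (- \<i> * of_nat n * t))"
    unfolding nlft_b_def w_sq w_pow mult_phase_diag_12 ..
  also have "\<dots> = f x"
    using hb t x by simp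
  finally show "Im (Umat n (\<lambda>k. arctan (gamma (int k))) x $ 1 $ 1) = f x" .
qed

end
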